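(* Let $T$ be a $\pi$-increasing tree with maximum vertex $v$. If $T$ is irreducible, then the $v$-dependence graph $G_v(T)$ is a tree rooted at $\pi^v$ with all edges directed towards the root (i.e., $\pi^v$ has outdegree $0$ and every other vertex has outdegree exactly $1$, and the underlying graph is a tree).
   Context: Standing assumptions: $r\ge2$ and $\pi$ is a set partition of $\{1,\dots,r\}$ having $\{1\}$ as a block; its blocks are $\pi_1,\dots,\pi_k$ with maxima $\mu_i=\max\pi_i$; $\pi^x$ denotes the block containing $x$. A set $\mathcal{S}$ is $\pi$-compatible if it is a union of blocks of $\pi$. An unordered increasing tree is a rooted tree on distinct positive integers, sons unordered, each son larger than its father. A $\pi$-increasing tree is an unordered increasing tree $T$ whose vertex-set is $\pi$-compatible and such that for any two elements $i<j$ of a same block of $\pi$ contained in $V(T)$, $i$ is an ancestor of $j$ in $T$. $v$-decomposition: for a vertex $v$ of $T$ with chain $a_1<\dots<a_\ell=v$ from the root to $v$, removing the chain edges leaves components $T^{(a_j)}$ rooted at $a_j$. $v$-dependence graph $G_v(T)$ of a $\pi$-increasing tree $T$: a directed graph whose vertices are the blocks of $\pi$ contained in $V(T)$; for each such block $\pi_i$ whose maximum $\mu_i$ is not on the chain $a_1,\dots,a_\ell$, $\mu_i$ is a non-root vertex of a unique $T^{(a_j)}$, and there is a directed edge (possibly a loop) from $\pi_i$ to $\pi^{a_j}$; there are no other edges. A $\pi$-increasing tree $T$ with maximum vertex $M$ is irreducible if $G_M(T)$ is connected (ignoring edge directions), and reducible otherwise. *)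

theory Defs
  imports Main "HOL-Library.Disjoint_Sets"
begin

(* A rooted tree with vertex set V (finite set of positive integers) is given by a
   parent function par on the non-root vertices. Increasing: every son is larger
   than its father, hence the root is Min V. *)
definition increasing_tree :: "nat set \<Rightarrow> (nat \<Rightarrow> nat) \<Rightarrow> bool" where
  "increasing_tree V par \<longleftrightarrow> finite V \<and> V \<noteq> {} \<and> 0 \<notin> V \<and>
     (\<forall>x\<in>V. x \<noteq> Min V \<longrightarrow> par x \<in> V \<and> par x < x)"

definition tree_edges :: "nat set \<Rightarrow> (nat \<Rightarrow> nat) \<Rightarrow> (nat \<times> nat) set" where
  "tree_edges V par = {(par x, x) | x. x \<in> V \<and> x \<noteq> Min V}"

definition ancestor :: "nat set \<Rightarrow> (nat \<Rightarrow> nat) \<Rightarrow> nat \<Rightarrow> nat \<Rightarrow> bool" where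
  "ancestor V par a b \<longleftrightarrow> (a, b) \<in> (tree_edges V par)\<^sup>+"

definition block :: "nat set set \<Rightarrow> nat \<Rightarrow> nat set" where
  "block P x = (THE B. B \<in> P \<and> x \<in> B)"

definition compatible :: "nat set set \<Rightarrow> nat set \<Rightarrow> bool" where
  "compatible P S \<longleftrightarrow> S = \<Union>{B \<in> P. B \<subseteq> S}"

definition pi_increasing :: "nat set set \<Rightarrow> nat set \<Rightarrow> (nat \<Rightarrow> nat) \<Rightarrow> bool" where
  "pi_increasing P V par \<longleftrightarrow> increasing_tree V par \<and> compatible P V \<and>
     (\<forall>B\<in>P. B \<subseteq> V \<longrightarrow> (\<forall>i\<in>B. \<forall>j\<in>B. i < j \<longrightarrow> ancestor V par i j))"

definition chain_to :: "nat set \<Rightarrow> (nat \<Rightarrow> nat) \<Rightarrow> nat \<Rightarrow> nat set" where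
  "chain_to V par v = {a. a = v \<or> ancestor V par a v}"

definition decomp_edges :: "nat set \<Rightarrow> (nat \<Rightarrow> nat) \<Rightarrow> nat \<Rightarrow> (nat \<times> nat) set" where
  "decomp_edges V par v = {(par x, x) | x. x \<in> V \<and> x \<noteq> Min V \<and> x \<notin> chain_to V par v}"

(* root a_j of the component T^(a_j) of the v-decomposition containing u *)
definition comp_root :: "nat set \<Rightarrow> (nat \<Rightarrow> nat) \<Rightarrow> nat \<Rightarrow> nat \<Rightarrow> nat" where
  "comp_root V par v u = (THE a. a \<in> chain_to V par v \<and> (a, u) \<in> (decomp_edges V par v)\<^sup>*)"

definition dep_vertices :: "nat set set \<Rightarrow> nat set \<Rightarrow> nat set set" where
  "dep_vertices P V = {B \<in> P. B \<subseteq> V}"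

definition dep_edges :: "nat set set \<Rightarrow> nat set \<Rightarrow> (nat \<Rightarrow> nat) \<Rightarrow> nat \<Rightarrow> (nat set \<times> nat set) set" where
  "dep_edges P V par v =
     {(B, block P (comp_root V par v (Max B))) | B.
        B \<in> P \<and> B \<subseteq> V \<and> Max B \<notin> chain_to V par v}"

definition weakly_connected :: "'a set \<Rightarrow> ('a \<times> 'a) set \<Rightarrow> bool" where
  "weakly_connected N E \<longleftrightarrow> (\<forall>x\<in>N. \<forall>y\<in>N. (x, y) \<in> (E \<union> E\<inverse>)\<^sup>*)"

definition irreducible_tree :: "nat set set \<Rightarrow> nat set \<Rightarrow> (nat \<Rightarrow> nat) \<Rightarrow> bool" where
  "irreducible_tree P V par \<longleftrightarrow>
     weakly_connected (dep_vertices P V) (dep_edges P V par (Max V))"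

(* the underlying undirected (multi)graph of the directed graph (N, E) is a tree:
   each directed edge (including loops, and both of a pair of opposite edges) counts
   as one undirected edge; a connected multigraph on n vertices with n-1 edges is a tree *)
definition underlying_tree :: "'a set \<Rightarrow> ('a \<times> 'a) set \<Rightarrow> bool" where
  "underlying_tree N E \<longleftrightarrow> finite N \<and> N \<noteq> {} \<and> E \<subseteq> N \<times> N \<and>
     weakly_connected N E \<and> card E = card N - 1"

definition outdeg :: "('a \<times> 'a) set \<Rightarrow> 'a \<Rightarrow> nat" where
  "outdeg E x = card {y. (x, y) \<in> E}"

end

theory Submission
  imports Defs
begin

text \<open>Every block of \<open>G\<^sub>v(T)\<close> has at most one outgoing edge, and exactly the blocks whose
  maximum lies on the chain to \<open>v\<close> have none. In a weakly connected graph of out-degree at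
  most one, following the edges from any vertex reaches the same sink, so there is at most one
  sink; as \<open>\<pi>\<^sup>v\<close> is one (its maximum is \<open>v\<close>), every other block has out-degree one. A connected graph on \<open>n\<close>
  vertices with \<open>n - 1\<close> edges is a tree.\<close>

lemma block_eq:
  assumes "partition_on A P" "B \<in> P" "x \<in> B"
  shows "block P x = B"
  unfolding block_def
proof (rule the_equality)
  show "B \<in> P \<and> x \<in> B" using assms(2,3) by simp
  fix C assume "C \<in> P \<and> x \<in> C"
  then show "C = B"
    using disjointD[OF partition_onD2[OF assms(1)], of C B] assms(2,3) by blast
qed

lemma block_in_dep_vertices:
  assumes "partition_on A P" "compatible P V" "x \<in> V"
  shows "block P x \<in> dep_vertices P V" "x \<in> block P x"
proof -
  obtain B where B: "B \<in> P" "B \<subseteq> V" "x \<in> B"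
    using assms(2,3) unfolding compatible_def by blast
  with block_eq[OF assms(1)] show "block P x \<in> dep_vertices P V" "x \<in> block P x"
    unfolding dep_vertices_def by auto
qed

lemma Max_dep_vertex_in:
  assumes "partition_on A P" "finite V" "B \<in> dep_vertices P V"
  shows "Max B \<in> V"
proof -
  have "B \<subseteq> V" "B \<noteq> {}"
    using assms(3) partition_onD3[OF assms(1)] unfolding dep_vertices_def by auto
  then show ?thesis using assms(2) by (meson Max_in finite_subset subsetD)
qed

lemma Max_block_Max:
  assumes "partition_on A P" "compatible P V" "finite V" "V \<noteq> {}"
  shows "Max (block P (Max V)) = Max V"
proof -
  have "Max V \<in> V" using assms(3,4) by simp
  then have B: "block P (Max V) \<in> dep_vertices P V" "Max V \<in> block P (Max V)"
    using block_in_dep_vertices[OF assms(1,2)] by auto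
  then have "block P (Max V) \<subseteq> V" unfolding dep_vertices_def by simp
  with B(2) assms(3) show ?thesis
    by (meson Max_eqI Max_ge finite_subset subsetD)
qed

lemma increasing_tree_ancestor_Min:
  assumes "increasing_tree V par"
  shows "x \<in> V \<Longrightarrow> x \<noteq> Min V \<Longrightarrow> ancestor V par (Min V) x"
proof (induction x rule: less_induct)
  case (less x)
  have par: "par x \<in> V" "par x < x"
    using assms less.prems unfolding increasing_tree_def by auto
  have edge: "(par x, x) \<in> tree_edges V par"
    using less.prems unfolding tree_edges_def by auto
  show ?case
  proof (cases "par x = Min V")
    case True
    with edge show ?thesis unfolding ancestor_def by auto
  next
    case False
    with less.IH[OF par(2) par(1)] edge show ?thesis unfolding ancestor_def by auto
  qed
qed

lemma Min_in_chain_to: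
  assumes "increasing_tree V par" "v \<in> V"
  shows "Min V \<in> chain_to V par v"
  using increasing_tree_ancestor_Min[OF assms] unfolding chain_to_def by auto

lemma chain_to_subset:
  assumes "increasing_tree V par" "v \<in> V"
  shows "chain_to V par v \<subseteq> V"
proof
  fix a assume "a \<in> chain_to V par v"
  then consider "a = v" | "(a, v) \<in> (tree_edges V par)\<^sup>+"
    unfolding chain_to_def ancestor_def by auto
  then show "a \<in> V"
  proof cases
    case 2
    then obtain y where "(a, y) \<in> tree_edges V par" by (metis tranclD)
    with assms(1) show ?thesis unfolding tree_edges_def increasing_tree_def by auto
  qed (use assms(2) in simp)
qed

lemma decomp_edges_rtrancl_cases:
  assumes "(a, u) \<in> (decomp_edges V par v)\<^sup>*"
  shows "u = a \<or> (u \<in> V \<and> u \<noteq> Min V \<and> u \<notin> chain_to V par v \<and>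
           (a, par u) \<in> (decomp_edges V par v)\<^sup>*)"
  using assms
proof (cases rule: rtranclE)
  case (step y)
  then show ?thesis unfolding decomp_edges_def by auto
qed simp

lemma decomp_component_root_exists:
  assumes "increasing_tree V par" "v \<in> V"
  shows "u \<in> V \<Longrightarrow> \<exists>a\<in>chain_to V par v. (a, u) \<in> (decomp_edges V par v)\<^sup>*"
proof (induction u rule: less_induct)
  case (less u)
  show ?case
  proof (cases "u \<in> chain_to V par v")
    case False
    then have "u \<noteq> Min V" using Min_in_chain_to[OF assms] by auto
    then have par: "par u \<in> V" "par u < u"
      using assms(1) less.prems unfolding increasing_tree_def by auto
    obtain a where "a \<in> chain_to V par v" "(a, par u) \<in> (decomp_edges V par v)\<^sup>*"
      using less.IH[OF par(2) par(1)] by blast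
    moreover have "(par u, u) \<in> decomp_edges V par v"
      using False \<open>u \<noteq> Min V\<close> less.prems unfolding decomp_edges_def by auto
    ultimately show ?thesis by (meson rtrancl.rtrancl_into_rtrancl)
  qed blast
qed

lemma decomp_component_root_unique:
  assumes "increasing_tree V par" "a \<in> chain_to V par v" "a' \<in> chain_to V par v"
  shows "(a, u) \<in> (decomp_edges V par v)\<^sup>* \<Longrightarrow> (a', u) \<in> (decomp_edges V par v)\<^sup>* \<Longrightarrow> a = a'"
proof (induction u rule: less_induct)
  case (less u)
  note cases_a = decomp_edges_rtrancl_cases[OF less.prems(1)]
   and cases_a' = decomp_edges_rtrancl_cases[OF less.prems(2)]
  show ?case
  proof (cases "u = a")
    case False
    with cases_a have u: "u \<in> V" "u \<noteq> Min V" "u \<notin> chain_to V par v"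
      "(a, par u) \<in> (decomp_edges V par v)\<^sup>*" by auto
    with cases_a' assms(3) have "(a', par u) \<in> (decomp_edges V par v)\<^sup>*" by auto
    moreover have "par u < u" using assms(1) u unfolding increasing_tree_def by auto
    ultimately show ?thesis using less.IH[OF _ u(4)] by blast
  qed (use cases_a' assms(2) in blast)
qed

lemma comp_root_in_chain_to:
  assumes "increasing_tree V par" "v \<in> V" "u \<in> V"
  shows "comp_root V par v u \<in> chain_to V par v"
proof -
  obtain a where a: "a \<in> chain_to V par v" "(a, u) \<in> (decomp_edges V par v)\<^sup>*"
    using decomp_component_root_exists[OF assms] by blast
  have "comp_root V par v u = a"
    unfolding comp_root_def
  proof (rule the_equality)
    fix b assume "b \<in> chain_to V par v \<and> (b, u) \<in> (decomp_edges V par v)\<^sup>*"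
    then show "b = a" using decomp_component_root_unique[OF assms(1) _ a(1) _ a(2)] by blast
  qed (use a in blast)
  with a show ?thesis by simp
qed

lemma dep_edge_target_in_dep_vertices:
  assumes "partition_on A P" "pi_increasing P V par" "v \<in> V" "B \<in> dep_vertices P V"
  shows "block P (comp_root V par v (Max B)) \<in> dep_vertices P V"
proof -
  have tree: "increasing_tree V par" and "compatible P V"
    using assms(2) unfolding pi_increasing_def by auto
  have "Max B \<in> V"
    using Max_dep_vertex_in[OF assms(1) _ assms(4)] tree unfolding increasing_tree_def by simp
  then have "comp_root V par v (Max B) \<in> V"
    using comp_root_in_chain_to[OF tree assms(3)] chain_to_subset[OF tree assms(3)] by blast
  then show ?thesis using block_in_dep_vertices[OF assms(1) \<open>compatible P V\<close>] by simp
qed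

lemma weakly_connected_unique_sink:
  assumes conn: "weakly_connected N E"
    and functional: "\<And>x y z. (x, y) \<in> E \<Longrightarrow> (x, z) \<in> E \<Longrightarrow> y = z"
    and s: "s \<in> N" "\<forall>y. (s, y) \<notin> E"
    and t: "t \<in> N" "\<forall>y. (t, y) \<notin> E"
  shows "s = t"
proof -
  define sink_of where "sink_of x = (THE z. (\<forall>y. (z, y) \<notin> E) \<and> (x, z) \<in> E\<^sup>*)" for x
  have sink_of_sink: "sink_of z = z" if "\<forall>y. (z, y) \<notin> E" for z
    unfolding sink_of_def
    by (rule the_equality) (use that in \<open>auto elim: converse_rtranclE\<close>)
  have sink_of_edge: "sink_of x = sink_of y" if "(x, y) \<in> E" for x y
  proof -
    have "(x, z) \<in> E\<^sup>* \<longleftrightarrow> (y, z) \<in> E\<^sup>*" if "\<forall>w. (z, w) \<notin> E" for z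
      using \<open>(x, y) \<in> E\<close> that functional
      by (metis converse_rtranclE converse_rtrancl_into_rtrancl)
    then show ?thesis unfolding sink_of_def by (intro arg_cong[where f = The] ext) blast
  qed
  have "sink_of x = sink_of y" if "(x, y) \<in> (E \<union> E\<inverse>)\<^sup>*" for x y
    using that by induction (auto dest: sink_of_edge)
  moreover have "(s, t) \<in> (E \<union> E\<inverse>)\<^sup>*"
    using conn s t unfolding weakly_connected_def by blast
  ultimately show ?thesis using sink_of_sink s t by metis
qed

lemma underlying_tree_parent_map:
  assumes "finite N" "b \<in> N" "f ` (N - {b}) \<subseteq> N"
    and E: "E = (\<lambda>x. (x, f x)) ` (N - {b})"
    and "weakly_connected N E"
  shows "underlying_tree N E \<and> outdeg E b = 0 \<and> (\<forall>x\<in>N. x \<noteq> b \<longrightarrow> outdeg E x = 1)"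
proof -
  have "card E = card (N - {b})" unfolding E by (rule card_image) (auto intro: inj_onI)
  then have "card E = card N - 1" using assms(1,2) by simp
  moreover have "E \<subseteq> N \<times> N" using assms(3) unfolding E by auto
  moreover have "{y. (b, y) \<in> E} = {}" unfolding E by auto
  moreover have "{y. (x, y) \<in> E} = {f x}" if "x \<in> N" "x \<noteq> b" for x
    using that unfolding E by auto
  ultimately show ?thesis
    using assms(1,2,5) unfolding underlying_tree_def outdeg_def by auto
qed

theorem lemma3p4:
  fixes r :: nat and P :: "nat set set" and V :: "nat set" and par :: "nat \<Rightarrow> nat"
  assumes "r \<ge> 2"
    and "partition_on {1..r} P"
    and "{1} \<in> P"
    and "pi_increasing P V par"
    and "irreducible_tree P V par"
  shows "underlying_tree (dep_vertices P V) (dep_edges P V par (Max V))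
       \<and> block P (Max V) \<in> dep_vertices P V
       \<and> outdeg (dep_edges P V par (Max V)) (block P (Max V)) = 0
       \<and> (\<forall>B \<in> dep_vertices P V. B \<noteq> block P (Max V) \<longrightarrow>
            outdeg (dep_edges P V par (Max V)) B = 1)"
proof -
  let ?N = "dep_vertices P V" and ?E = "dep_edges P V par (Max V)"
    and ?C = "chain_to V par (Max V)" and ?b = "block P (Max V)"
    and ?f = "\<lambda>B. block P (comp_root V par (Max V) (Max B))"
  have "compatible P V" and V: "finite V" "V \<noteq> {}"
    using assms(4) unfolding pi_increasing_def increasing_tree_def by auto
  then have b: "?b \<in> ?N" "Max ?b \<in> ?C"
    using block_in_dep_vertices[OF assms(2)] Max_block_Max[OF assms(2)]
    unfolding chain_to_def by auto
  have conn: "weakly_connected ?N ?E"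
    using assms(5) unfolding irreducible_tree_def .
  have functional: "\<And>B C D. (B, C) \<in> ?E \<Longrightarrow> (B, D) \<in> ?E \<Longrightarrow> C = D"
    unfolding dep_edges_def by blast
  have sink: "\<forall>C. (B, C) \<notin> ?E" if "Max B \<in> ?C" for B
    using that unfolding dep_edges_def by blast
  have "B = ?b" if "B \<in> ?N" "Max B \<in> ?C" for B
    using weakly_connected_unique_sink[OF conn functional that(1) sink[OF that(2)] b(1) sink[OF b(2)]] .
  then have "{B \<in> ?N. Max B \<notin> ?C} = ?N - {?b}"
    using b by blast
  moreover have "?E = (\<lambda>B. (B, ?f B)) ` {B \<in> ?N. Max B \<notin> ?C}"
    unfolding dep_edges_def dep_vertices_def by blast
  ultimately have E: "?E = (\<lambda>B. (B, ?f B)) ` (?N - {?b})"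
    by simp
  have "?N \<subseteq> Pow V" unfolding dep_vertices_def by blast
  with V(1) have "finite ?N" by (meson finite_Pow_iff finite_subset)
  moreover have "?f ` (?N - {?b}) \<subseteq> ?N"
    using dep_edge_target_in_dep_vertices[OF assms(2,4) Max_in[OF V]] by blast
  ultimately show ?thesis
    using underlying_tree_parent_map[OF _ b(1) _ E conn] b(1) by blast
qed

end
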